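(* Let $A_1,\ldots,A_m\in\mathbb{R}^{n\times n}$ with $\mathrm{JSR}(\{A_i\}_{i=1}^m)<1$, and let $c:\mathbb{R}^n\to\mathbb{R}_{\geq0}$ be Lipschitz continuous (with respect to the Euclidean norm) on a neighborhood $X\subseteq\mathbb{R}^n$ of the origin, with Lipschitz constant $L$. Let $\rho<1$ and let $\lVert\cdot\rVert_*$ be a norm on $\mathbb{R}^n$ such that for every solution $\xi$ of $\xi(t+1)=A_{\sigma(t)}\xi(t)$ (for any switching signal $\sigma$) and all $t\in\mathbb{N}$, $\lVert\xi(t)\rVert_*\leq\rho^t\lVert\xi(0)\rVert_*$. Let $\eta>0$ be such that $B_*(\eta):=\{x\in\mathbb{R}^n:\lVert x\rVert_*\leq\eta\}\subseteq X$. Then the optimal value function $J^\star$ and the worst-case value function $J^\circ$ are Lipschitz continuous on $B_*(\eta)$ (with respect to the Euclidean norm), with Lipschitz constant $M=\kappa(\lVert\cdot\rVert_* )L/(1-\rho)$.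
   Context: A discrete-time switched linear system $\{A_i\}_{i=1}^m$ is $\xi(t+1)=A_{\sigma(t)}\xi(t)$, $t\in\mathbb{N}$, with switching signal $\sigma:\mathbb{N}\to\{1,\ldots,m\}$; $\xi(t,x,\sigma)$ denotes the solution at time $t$ with $\xi(0)=x$. The joint spectral radius $\mathrm{JSR}(\{A_i\})$ is the infimum of $r\geq0$ such that there is $C\geq0$ with $\lVert\xi(t)\rVert\leq Cr^t\lVert\xi(0)\rVert$ for all solutions and all $t$. Given a cost $c:\mathbb{R}^n\to\mathbb{R}_{\geq0}$, $J(x,\sigma)=\sum_{t=0}^\infty c(\xi(t,x,\sigma))$, $J^\star(x)=\inf_\sigma J(x,\sigma)$ (optimal value function) and $J^\circ(x)=\sup_\sigma J(x,\sigma)$ (worst-case value function). $\lVert\cdot\rVert$ is the Euclidean norm, and for a norm $\lVert\cdot\rVert'$ its eccentricity is $\kappa(\lVert\cdot\rVert')=\max_{\lVert x\rVert=1}\lVert x\rVert'/\min_{\lVert x\rVert=1}\lVert x\rVert'$. *)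

theory Defs
  imports "HOL-Analysis.Analysis"
begin

definition signals :: "nat \<Rightarrow> (nat \<Rightarrow> nat) set" where
  "signals m = {\<sigma>. \<forall>t. \<sigma> t \<in> {1..m}}"

fun sol :: "(nat \<Rightarrow> real^'n^'n) \<Rightarrow> (nat \<Rightarrow> nat) \<Rightarrow> real^'n \<Rightarrow> nat \<Rightarrow> real^'n" where
  "sol A \<sigma> x 0 = x"
| "sol A \<sigma> x (Suc t) = A (\<sigma> t) *v sol A \<sigma> x t"

definition JSR :: "(nat \<Rightarrow> real^'n^'n) \<Rightarrow> nat \<Rightarrow> real" where
  "JSR A m = Inf {r. r \<ge> 0 \<and> (\<exists>C\<ge>0. \<forall>\<sigma>\<in>signals m. \<forall>x t.
       norm (sol A \<sigma> x t) \<le> C * r ^ t * norm x)}"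

definition Jcost :: "(real^'n \<Rightarrow> real) \<Rightarrow> (nat \<Rightarrow> real^'n^'n) \<Rightarrow> (nat \<Rightarrow> nat) \<Rightarrow> real^'n \<Rightarrow> real" where
  "Jcost c A \<sigma> x = (\<Sum>t. c (sol A \<sigma> x t))"

definition Jopt :: "(real^'n \<Rightarrow> real) \<Rightarrow> (nat \<Rightarrow> real^'n^'n) \<Rightarrow> nat \<Rightarrow> real^'n \<Rightarrow> real" where
  "Jopt c A m x = (INF \<sigma>\<in>signals m. Jcost c A \<sigma> x)"

definition Jworst :: "(real^'n \<Rightarrow> real) \<Rightarrow> (nat \<Rightarrow> real^'n^'n) \<Rightarrow> nat \<Rightarrow> real^'n \<Rightarrow> real" where
  "Jworst c A m x = (SUP \<sigma>\<in>signals m. Jcost c A \<sigma> x)"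

definition is_norm :: "(real^'n \<Rightarrow> real) \<Rightarrow> bool" where
  "is_norm N \<longleftrightarrow> (\<forall>x. N x \<ge> 0) \<and> (\<forall>x. N x = 0 \<longleftrightarrow> x = 0)
     \<and> (\<forall>a x. N (a *\<^sub>R x) = \<bar>a\<bar> * N x) \<and> (\<forall>x y. N (x + y) \<le> N x + N y)"

definition eccentricity :: "(real^'n \<Rightarrow> real) \<Rightarrow> real" where
  "eccentricity N = (SUP x\<in>sphere 0 1. N x) / (INF x\<in>sphere 0 1. N x)"

end

theory Submission
  imports Defs
begin

text \<open>All norms on a finite-dimensional space are equivalent: \<open>N\<close> is squeezed between the
  minimum and the maximum of \<open>N\<close> on the Euclidean unit sphere, whose ratio is the eccentricity.
  Hence the decay \<open>N (\<xi> t) \<le> \<rho>\<^sup>t N (\<xi> 0)\<close>, applied to the difference of two solutions (the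
  system is linear), gives \<open>\<parallel>\<xi>(t,x,\<sigma>) - \<xi>(t,y,\<sigma>)\<parallel> \<le> \<kappa> \<rho>\<^sup>t \<parallel>x - y\<parallel>\<close>. Both trajectories stay in
  the \<open>N\<close>-ball, where \<open>c\<close> is \<open>L\<close>-Lipschitz, so summing the geometric series shows that every
  \<open>J(\<cdot>,\<sigma>)\<close> is \<open>\<kappa> L / (1 - \<rho>)\<close>-Lipschitz on the ball. Infima and suprema of a family of
  functions with a common Lipschitz constant inherit that constant.\<close>

lemma is_norm_nonneg: "is_norm N \<Longrightarrow> 0 \<le> N x"
  unfolding is_norm_def by blast

lemma is_norm_zero_iff: "is_norm N \<Longrightarrow> N x = 0 \<longleftrightarrow> x = 0"
  unfolding is_norm_def by blast

lemma is_norm_zero: "is_norm N \<Longrightarrow> N 0 = 0"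
  by (simp add: is_norm_zero_iff)

lemma is_norm_scaleR: "is_norm N \<Longrightarrow> N (a *\<^sub>R x) = \<bar>a\<bar> * N x"
  unfolding is_norm_def by blast

lemma is_norm_triangle: "is_norm N \<Longrightarrow> N (x + y) \<le> N x + N y"
  unfolding is_norm_def by blast

lemma is_norm_minus: "is_norm N \<Longrightarrow> N (- x) = N x"
  using is_norm_scaleR[of N "- 1" x] by simp

lemma is_norm_sum_le:
  assumes "is_norm N"
  shows "N (\<Sum>i\<in>S. f i) \<le> (\<Sum>i\<in>S. N (f i))"
proof (induction S rule: infinite_finite_induct)
  case (insert i S)
  then show ?case
    using is_norm_triangle[OF assms, of "f i" "sum f S"] by simp
qed (simp_all add: is_norm_zero[OF assms])

lemma is_norm_le_norm:
  fixes N :: "real^'n \<Rightarrow> real"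
  assumes "is_norm N"
  obtains B where "0 \<le> B" "\<And>x. N x \<le> B * norm x"
proof
  let ?B = "\<Sum>b\<in>(Basis :: (real^'n) set). N b"
  show "0 \<le> ?B"
    by (simp add: sum_nonneg is_norm_nonneg[OF assms])
  fix x :: "real^'n"
  have "N x = N (\<Sum>b\<in>Basis. (x \<bullet> b) *\<^sub>R b)"
    by (simp add: euclidean_representation)
  also have "\<dots> \<le> (\<Sum>b\<in>Basis. \<bar>x \<bullet> b\<bar> * N b)"
    using is_norm_sum_le[OF assms, of "\<lambda>b. (x \<bullet> b) *\<^sub>R b" Basis]
    by (simp add: is_norm_scaleR[OF assms])
  also have "\<dots> \<le> (\<Sum>b\<in>Basis. norm x * N b)"
    by (intro sum_mono mult_right_mono) (simp_all add: Basis_le_norm is_norm_nonneg[OF assms])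
  finally show "N x \<le> ?B * norm x"
    by (simp add: sum_distrib_left mult.commute)
qed

lemma is_norm_reverse_triangle:
  assumes "is_norm N"
  shows "\<bar>N x - N y\<bar> \<le> N (x - y)"
  using is_norm_triangle[OF assms, of y "x - y"] is_norm_triangle[OF assms, of x "y - x"]
    is_norm_minus[OF assms, of "x - y"]
  by simp

lemma is_norm_continuous_on:
  assumes "is_norm N"
  shows "continuous_on S N"
proof -
  obtain B where B: "0 \<le> B" "\<And>x. N x \<le> B * norm x"
    using is_norm_le_norm[OF assms] by blast
  have "B-lipschitz_on S N"
  proof (rule lipschitz_onI)
    fix x y
    have "\<bar>N x - N y\<bar> \<le> B * norm (x - y)"
      using is_norm_reverse_triangle[OF assms] B(2) order_trans by blast
    then show "dist (N x) (N y) \<le> B * dist x y"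
      by (simp add: dist_real_def dist_norm)
  qed (fact B(1))
  then show ?thesis
    by (rule lipschitz_on_continuous_on)
qed

lemma is_norm_scale_to_sphere:
  assumes "is_norm N" "z \<noteq> 0"
  shows "\<exists>w\<in>sphere 0 1. N z = norm z * N w"
proof
  show "z /\<^sub>R norm z \<in> sphere 0 1"
    using assms(2) by simp
  show "N z = norm z * N (z /\<^sub>R norm z)"
    using assms by (simp add: is_norm_scaleR)
qed

lemma is_norm_Inf_sphere_pos:
  assumes "is_norm N"
  shows "0 < (INF x\<in>sphere (0::real^'n) 1. N x)"
proof -
  have "sphere (0::real^'n) 1 \<noteq> {}"
    by (simp add: sphere_eq_empty)
  then obtain x0 :: "real^'n" where x0: "x0 \<in> sphere 0 1" "\<And>y. y \<in> sphere 0 1 \<Longrightarrow> N x0 \<le> N y"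
    using continuous_attains_inf[OF compact_sphere _ is_norm_continuous_on[OF assms]] by blast
  have "(INF x\<in>sphere 0 1. N x) = N x0"
    using x0 by (intro cInf_eq_minimum) auto
  moreover have "x0 \<noteq> 0"
    using x0(1) by auto
  ultimately show ?thesis
    using is_norm_nonneg[OF assms, of x0] is_norm_zero_iff[OF assms, of x0] by simp
qed

lemma is_norm_ge_Inf_sphere:
  assumes "is_norm N"
  shows "(INF x\<in>sphere 0 1. N x) * norm z \<le> N z"
proof (cases "z = 0")
  case False
  then obtain w where w: "w \<in> sphere 0 1" "N z = norm z * N w"
    using is_norm_scale_to_sphere[OF assms] by blast
  have "(INF x\<in>sphere 0 1. N x) \<le> N w"
    using w(1) is_norm_nonneg[OF assms] by (intro cINF_lower bdd_belowI2) auto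
  then have "(INF x\<in>sphere 0 1. N x) * norm z \<le> N w * norm z"
    by (rule mult_right_mono) simp
  then show ?thesis
    using w(2) by (simp add: mult.commute)
qed (simp add: is_norm_zero[OF assms])

lemma is_norm_le_Sup_sphere:
  assumes "is_norm N"
  shows "N z \<le> (SUP x\<in>sphere 0 1. N x) * norm z"
proof (cases "z = 0")
  case True
  then show ?thesis
    by (simp add: is_norm_zero[OF assms])
next
  case False
  then obtain w where w: "w \<in> sphere 0 1" "N z = norm z * N w"
    using is_norm_scale_to_sphere[OF assms] by blast
  obtain B where B: "\<And>x. N x \<le> B * norm x"
    using is_norm_le_norm[OF assms] by blast
  have "N x \<le> B" if "x \<in> sphere 0 1" for x
    using B[of x] that by simp
  then have "bdd_above (N ` sphere 0 1)"
    by (intro bdd_aboveI2)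
  then have "N w \<le> (SUP x\<in>sphere 0 1. N x)"
    using w(1) by (rule cSUP_upper[rotated])
  then have "N w * norm z \<le> (SUP x\<in>sphere 0 1. N x) * norm z"
    by (rule mult_right_mono) simp
  then show ?thesis
    using w(2) by (simp add: mult.commute)
qed

lemma eccentricity_ge_one:
  assumes "is_norm N"
  shows "1 \<le> eccentricity (N :: real^'n \<Rightarrow> real)"
proof -
  obtain b :: "real^'n" where "b \<in> Basis"
    using nonempty_Basis by blast
  then have e: "b \<in> sphere 0 1"
    by simp
  have "(INF x\<in>sphere 0 1. N x) \<le> (SUP x\<in>sphere 0 1. N x)"
    using is_norm_ge_Inf_sphere[OF assms, of b] is_norm_le_Sup_sphere[OF assms, of b] e by simp
  then show ?thesis
    using is_norm_Inf_sphere_pos[OF assms] by (simp add: eccentricity_def)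
qed

lemma norm_le_eccentricity_mult:
  assumes "is_norm N" "0 \<le> r" "N u \<le> r * N v"
  shows "norm u \<le> eccentricity N * r * norm v"
proof -
  let ?a = "INF x\<in>sphere 0 1. N x" and ?b = "SUP x\<in>sphere 0 1. N x"
  have "?a * norm u \<le> r * (?b * norm v)"
    using is_norm_ge_Inf_sphere[OF assms(1), of u] assms(3)
      mult_left_mono[OF is_norm_le_Sup_sphere[OF assms(1), of v] assms(2)]
    by linarith
  then show ?thesis
    using is_norm_Inf_sphere_pos[OF assms(1)] by (simp add: eccentricity_def field_simps)
qed

lemma sol_diff: "sol A \<sigma> (x - y) t = sol A \<sigma> x t - sol A \<sigma> y t"
  by (induction t) (simp_all add: matrix_vector_mult_diff_distrib)

lemma sol_zero: "sol A \<sigma> 0 t = 0"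
  by (induction t) simp_all

lemma contraction_rate_nonneg:
  assumes "is_norm N" "\<forall>x t. N (sol A \<sigma> x t) \<le> \<rho> ^ t * N (x :: real^'n)"
  shows "0 \<le> \<rho>"
proof -
  obtain e :: "real^'n" where "e \<in> Basis"
    using nonempty_Basis by blast
  then have "0 < N e"
    using is_norm_nonneg[OF assms(1), of e] is_norm_zero_iff[OF assms(1), of e] by auto
  moreover have "0 \<le> \<rho> * N e"
    using assms(2)[rule_format, of e 1] is_norm_nonneg[OF assms(1), of "sol A \<sigma> e 1"] by simp
  ultimately show ?thesis
    by (simp add: zero_le_mult_iff)
qed

lemma sol_stays_in_ball:
  assumes "is_norm N" "\<forall>x t. N (sol A \<sigma> x t) \<le> \<rho> ^ t * N x" "0 \<le> \<rho>" "\<rho> \<le> 1"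
  shows "N (sol A \<sigma> x t) \<le> N x"
proof -
  have "N (sol A \<sigma> x t) \<le> \<rho> ^ t * N x"
    using assms(2) by blast
  also have "\<dots> \<le> N x"
    using assms(3,4) by (intro mult_left_le_one_le) (simp_all add: is_norm_nonneg[OF assms(1)] power_le_one)
  finally show ?thesis .
qed

lemma norm_sol_diff_le:
  assumes "is_norm N" "\<forall>x t. N (sol A \<sigma> x t) \<le> \<rho> ^ t * N x" "0 \<le> \<rho>"
  shows "norm (sol A \<sigma> x t - sol A \<sigma> y t) \<le> eccentricity N * \<rho> ^ t * norm (x - y)"
  using norm_le_eccentricity_mult[OF assms(1) zero_le_power[OF assms(3)]] assms(2)
  by (simp add: sol_diff[symmetric])

lemma cost_sol_diff_le:
  assumes N: "is_norm N" and contr: "\<forall>x t. N (sol A \<sigma> x t) \<le> \<rho> ^ t * N x"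
    and \<rho>: "0 \<le> \<rho>" "\<rho> \<le> 1" and lip: "L-lipschitz_on X c" and sub: "{x. N x \<le> \<eta>} \<subseteq> X"
    and x: "N x \<le> \<eta>" and y: "N y \<le> \<eta>"
  shows "\<bar>c (sol A \<sigma> x t) - c (sol A \<sigma> y t)\<bar> \<le> eccentricity N * L * \<rho> ^ t * norm (x - y)"
proof -
  have in_X: "sol A \<sigma> v t \<in> X" if "N v \<le> \<eta>" for v
    using sol_stays_in_ball[OF N contr \<rho>, of v t] that sub by auto
  have "\<bar>c (sol A \<sigma> x t) - c (sol A \<sigma> y t)\<bar> \<le> L * norm (sol A \<sigma> x t - sol A \<sigma> y t)"
    using lipschitz_onD[OF lip in_X[OF x] in_X[OF y]] by (simp add: dist_real_def dist_norm)
  also have "\<dots> \<le> L * (eccentricity N * \<rho> ^ t * norm (x - y))"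
    using norm_sol_diff_le[OF N contr \<rho>(1)] lipschitz_on_nonneg[OF lip] by (rule mult_left_mono)
  finally show ?thesis
    by (simp add: mult_ac)
qed

lemma suminf_diff_le_geometric:
  fixes f g :: "nat \<Rightarrow> real"
  assumes "0 \<le> \<rho>" "\<rho> < 1" "summable f" "summable g" "\<And>t. \<bar>f t - g t\<bar> \<le> C * \<rho> ^ t"
  shows "\<bar>suminf f - suminf g\<bar> \<le> C / (1 - \<rho>)"
proof -
  have geom: "summable (\<lambda>t. C * \<rho> ^ t)"
    using assms(1,2) by (simp add: summable_geometric)
  have abs_summable: "summable (\<lambda>t. \<bar>f t - g t\<bar>)"
    by (rule summable_comparison_test'[OF geom]) (simp add: assms(5))
  have "\<bar>suminf f - suminf g\<bar> = \<bar>\<Sum>t. f t - g t\<bar>"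
    by (simp add: suminf_diff[OF assms(3,4)])
  also have "\<dots> \<le> (\<Sum>t. \<bar>f t - g t\<bar>)"
    by (rule summable_rabs[OF abs_summable])
  also have "\<dots> \<le> (\<Sum>t. C * \<rho> ^ t)"
    by (rule suminf_le[OF assms(5) abs_summable geom])
  also have "\<dots> = C / (1 - \<rho>)"
    using assms(1,2) by (simp add: suminf_geometric suminf_mult)
  finally show ?thesis .
qed

lemma Jcost_lipschitz_on:
  assumes N: "is_norm N" and contr: "\<forall>x t. N (sol A \<sigma> x t) \<le> \<rho> ^ t * N x"
    and \<rho>: "0 \<le> \<rho>" "\<rho> < 1" and lip: "L-lipschitz_on X c" and c0: "c 0 = 0"
    and sub: "{x. N x \<le> \<eta>} \<subseteq> X"
  shows "(eccentricity N * L / (1 - \<rho>))-lipschitz_on {x. N x \<le> \<eta>} (Jcost c A \<sigma>)"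
proof (rule lipschitz_onI)
  note cost_diff = cost_sol_diff_le[OF N contr \<rho>(1) less_imp_le[OF \<rho>(2)] lip sub]
  fix x y assume x: "x \<in> {x. N x \<le> \<eta>}" and y: "y \<in> {x. N x \<le> \<eta>}"
  have zero: "N 0 \<le> \<eta>"
    using x is_norm_nonneg[OF N, of x] by (simp add: is_norm_zero[OF N])
  \<comment> \<open>compare with the zero solution, along which the cost vanishes\<close>
  have summable: "summable (\<lambda>t. c (sol A \<sigma> v t))" if "N v \<le> \<eta>" for v
  proof (rule summable_comparison_test')
    show "summable (\<lambda>t. eccentricity N * L * norm v * \<rho> ^ t)"
      using \<rho> by (simp add: summable_geometric)
    show "norm (c (sol A \<sigma> v t)) \<le> eccentricity N * L * norm v * \<rho> ^ t" for t
      using cost_diff[OF that zero, of t] by (simp add: c0 sol_zero mult_ac)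
  qed
  have "\<bar>Jcost c A \<sigma> x - Jcost c A \<sigma> y\<bar> \<le> eccentricity N * L * norm (x - y) / (1 - \<rho>)"
    unfolding Jcost_def
    using x y cost_diff
    by (intro suminf_diff_le_geometric summable \<rho>) (simp_all add: mult_ac)
  then show "dist (Jcost c A \<sigma> x) (Jcost c A \<sigma> y) \<le> eccentricity N * L / (1 - \<rho>) * dist x y"
    by (simp add: dist_real_def dist_norm)
next
  show "0 \<le> eccentricity N * L / (1 - \<rho>)"
    using eccentricity_ge_one[OF N] lipschitz_on_nonneg[OF lip] \<rho>(2) by simp
qed

lemma Jcost_zero: "c 0 = 0 \<Longrightarrow> Jcost c A \<sigma> 0 = 0"
  by (simp add: Jcost_def sol_zero)

lemma lipschitz_family_bdd_below:
  fixes f :: "'s \<Rightarrow> 'a::metric_space \<Rightarrow> real"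
  assumes "\<forall>s\<in>S. M-lipschitz_on U (f s)" "x0 \<in> U" "bdd_below ((\<lambda>s. f s x0) ` S)" "x \<in> U"
  shows "bdd_below ((\<lambda>s. f s x) ` S)"
proof -
  obtain b where b: "\<And>s. s \<in> S \<Longrightarrow> b \<le> f s x0"
    using assms(3) by (auto simp: bdd_below_def)
  have "b - M * dist x x0 \<le> f s x" if "s \<in> S" for s
    using b[OF that] lipschitz_onD[OF bspec[OF assms(1) that] assms(4,2)] by (simp add: dist_real_def)
  then show ?thesis
    by (intro bdd_belowI2)
qed

lemma lipschitz_on_INF:
  fixes f :: "'s \<Rightarrow> 'a::metric_space \<Rightarrow> real"
  assumes lip: "\<forall>s\<in>S. M-lipschitz_on U (f s)" and "S \<noteq> {}"
    and "x0 \<in> U" "bdd_below ((\<lambda>s. f s x0) ` S)"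
  shows "M-lipschitz_on U (\<lambda>x. INF s\<in>S. f s x)"
proof (rule lipschitz_onI)
  have INF_le: "(INF s\<in>S. f s x) \<le> (INF s\<in>S. f s y) + M * dist x y" if "x \<in> U" "y \<in> U" for x y
  proof -
    have "(INF s\<in>S. f s x) - M * dist x y \<le> f s y" if "s \<in> S" for s
      using cINF_lower[OF lipschitz_family_bdd_below[OF assms(1,3,4) \<open>x \<in> U\<close>] that]
        lipschitz_onD[OF bspec[OF lip that] \<open>x \<in> U\<close> \<open>y \<in> U\<close>]
      by (simp add: dist_real_def)
    then have "(INF s\<in>S. f s x) - M * dist x y \<le> (INF s\<in>S. f s y)"
      by (rule cINF_greatest[OF \<open>S \<noteq> {}\<close>])
    then show ?thesis
      by simp
  qed
  fix x y assume "x \<in> U" "y \<in> U"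
  then show "dist (INF s\<in>S. f s x) (INF s\<in>S. f s y) \<le> M * dist x y"
    using INF_le[of x y] INF_le[of y x] by (simp add: dist_real_def dist_commute abs_le_iff)
next
  show "0 \<le> M"
    using assms(1,2) lipschitz_on_nonneg by blast
qed

lemma lipschitz_on_SUP:
  fixes f :: "'s \<Rightarrow> 'a::metric_space \<Rightarrow> real"
  assumes lip: "\<forall>s\<in>S. M-lipschitz_on U (f s)" and "S \<noteq> {}"
    and "x0 \<in> U" "bdd_above ((\<lambda>s. f s x0) ` S)"
  shows "M-lipschitz_on U (\<lambda>x. SUP s\<in>S. f s x)"
proof -
  have lip_neg: "\<forall>s\<in>S. M-lipschitz_on U (\<lambda>x. - f s x)"
    using lip by simp
  have bdd_neg: "bdd_below ((\<lambda>s. - f s x0) ` S)"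
    using assms(4) by (simp add: bdd_below_uminus_image)
  have "M-lipschitz_on U (\<lambda>x. - (INF s\<in>S. - f s x))"
    using lipschitz_on_INF[OF lip_neg \<open>S \<noteq> {}\<close> assms(3) bdd_neg] by simp
  moreover have "(SUP s\<in>S. f s x) = - (INF s\<in>S. - f s x)" if "x \<in> U" for x
    using uminus_cINF[OF lipschitz_family_bdd_below[OF lip_neg assms(3) bdd_neg that] \<open>S \<noteq> {}\<close>]
    by simp
  ultimately show ?thesis
    by (rule lipschitz_on_transform)
qed

theorem theorem2:
  fixes A :: "nat \<Rightarrow> real^'n^'n" and m :: nat
    and c :: "real^'n \<Rightarrow> real" and X :: "(real^'n) set" and L :: real
    and \<rho> :: real and N :: "real^'n \<Rightarrow> real" and \<eta> :: real
  assumes m_pos: "m \<ge> 1"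
    and jsr: "JSR A m < 1"
    and c_nonneg: "\<forall>x. c x \<ge> 0"
    and c_zero: "c 0 = 0"
    and X_nhd: "0 \<in> interior X"
    and c_lip: "L-lipschitz_on X c"
    and rho: "\<rho> < 1"
    and N_norm: "is_norm N"
    and contr: "\<forall>\<sigma>\<in>signals m. \<forall>x t. N (sol A \<sigma> x t) \<le> \<rho> ^ t * N x"
    and eta: "\<eta> > 0"
    and ball_sub: "{x. N x \<le> \<eta>} \<subseteq> X"
  shows "(eccentricity N * L / (1 - \<rho>))-lipschitz_on {x. N x \<le> \<eta>} (Jopt c A m)
       \<and> (eccentricity N * L / (1 - \<rho>))-lipschitz_on {x. N x \<le> \<eta>} (Jworst c A m)"
proof -
  have signal: "(\<lambda>_. 1) \<in> signals m"
    using m_pos by (simp add: signals_def)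
  have "0 \<le> \<rho>"
    using contraction_rate_nonneg[OF N_norm] contr signal by blast
  then have lip: "\<forall>\<sigma>\<in>signals m.
      (eccentricity N * L / (1 - \<rho>))-lipschitz_on {x. N x \<le> \<eta>} (Jcost c A \<sigma>)"
    using Jcost_lipschitz_on[OF N_norm _ _ rho c_lip c_zero ball_sub] contr by blast
  have zero: "0 \<in> {x. N x \<le> \<eta>}"
    using eta by (simp add: is_norm_zero[OF N_norm])
  have "(\<lambda>\<sigma>. Jcost c A \<sigma> 0) ` signals m = {0}"
    using signal by (auto simp: Jcost_zero c_zero)
  then show ?thesis
    unfolding Jopt_def Jworst_def
    using lipschitz_on_INF[OF lip _ zero] lipschitz_on_SUP[OF lip _ zero] signal by auto
qed

end
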